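(* Let $\mathfrak g$ be a finite-dimensional simple Lie algebra which is either complex, or real of dimension greater than $3$. Then every maximal (proper) subalgebra $\mathfrak h$ of $\mathfrak g$ is a maximal Lie triple subsystem of $\mathfrak g$, i.e. there is no Lie triple subsystem $T$ with $\mathfrak h\subsetneq T\subsetneq\mathfrak g$.
   Context: A Lie algebra $\mathfrak g$ is regarded as a Lie triple system with triple product $[x,y,z]:=[[x,y],z]$. A Lie triple subsystem of $\mathfrak g$ is a vector subspace $T$ with $[[T,T],T]\subseteq T$. A maximal Lie triple subsystem is a proper Lie triple subsystem not properly contained in any other proper Lie triple subsystem. *)

theory Defs
  imports Complex_Main
begin

text \<open>A Lie algebra over a field 'k: the underlying vector space is the whole type 'v
  (with scalar multiplication scale), and br is the Lie bracket.\<close>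

definition lie_algebra :: "('k::field \<Rightarrow> 'v::ab_group_add \<Rightarrow> 'v) \<Rightarrow> ('v \<Rightarrow> 'v \<Rightarrow> 'v) \<Rightarrow> bool" where
  "lie_algebra scale br \<longleftrightarrow>
     vector_space scale \<and>
     (\<forall>x y z. br (x + y) z = br x z + br y z) \<and>
     (\<forall>x y z. br x (y + z) = br x y + br x z) \<and>
     (\<forall>a x y. br (scale a x) y = scale a (br x y)) \<and>
     (\<forall>a x y. br x (scale a y) = scale a (br x y)) \<and>
     (\<forall>x. br x x = 0) \<and>
     (\<forall>x y z. br x (br y z) + br y (br z x) + br z (br x y) = 0)"

definition finite_dim :: "('k::field \<Rightarrow> 'v::ab_group_add \<Rightarrow> 'v) \<Rightarrow> bool" where
  "finite_dim scale \<longleftrightarrow> (\<exists>B. finite B \<and> module.span scale B = UNIV)"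

definition lie_ideal :: "('k::field \<Rightarrow> 'v::ab_group_add \<Rightarrow> 'v) \<Rightarrow> ('v \<Rightarrow> 'v \<Rightarrow> 'v) \<Rightarrow> 'v set \<Rightarrow> bool" where
  "lie_ideal scale br I \<longleftrightarrow> module.subspace scale I \<and> (\<forall>x y. y \<in> I \<longrightarrow> br x y \<in> I)"

definition simple_lie_algebra :: "('k::field \<Rightarrow> 'v::ab_group_add \<Rightarrow> 'v) \<Rightarrow> ('v \<Rightarrow> 'v \<Rightarrow> 'v) \<Rightarrow> bool" where
  "simple_lie_algebra scale br \<longleftrightarrow> lie_algebra scale br \<and>
     (\<exists>x y. br x y \<noteq> 0) \<and>
     (\<forall>I. lie_ideal scale br I \<longrightarrow> I = {0} \<or> I = UNIV)"

definition lie_subalgebra :: "('k::field \<Rightarrow> 'v::ab_group_add \<Rightarrow> 'v) \<Rightarrow> ('v \<Rightarrow> 'v \<Rightarrow> 'v) \<Rightarrow> 'v set \<Rightarrow> bool" where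
  "lie_subalgebra scale br H \<longleftrightarrow> module.subspace scale H \<and> (\<forall>x\<in>H. \<forall>y\<in>H. br x y \<in> H)"

definition maximal_subalgebra :: "('k::field \<Rightarrow> 'v::ab_group_add \<Rightarrow> 'v) \<Rightarrow> ('v \<Rightarrow> 'v \<Rightarrow> 'v) \<Rightarrow> 'v set \<Rightarrow> bool" where
  "maximal_subalgebra scale br H \<longleftrightarrow> lie_subalgebra scale br H \<and> H \<noteq> UNIV \<and>
     (\<forall>K. lie_subalgebra scale br K \<and> H \<subseteq> K \<and> K \<noteq> UNIV \<longrightarrow> K = H)"

definition lie_triple_subsystem :: "('k::field \<Rightarrow> 'v::ab_group_add \<Rightarrow> 'v) \<Rightarrow> ('v \<Rightarrow> 'v \<Rightarrow> 'v) \<Rightarrow> 'v set \<Rightarrow> bool" where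
  "lie_triple_subsystem scale br T \<longleftrightarrow> module.subspace scale T \<and>
     (\<forall>x\<in>T. \<forall>y\<in>T. \<forall>z\<in>T. br (br x y) z \<in> T)"

definition maximal_lie_triple_subsystem :: "('k::field \<Rightarrow> 'v::ab_group_add \<Rightarrow> 'v) \<Rightarrow> ('v \<Rightarrow> 'v \<Rightarrow> 'v) \<Rightarrow> 'v set \<Rightarrow> bool" where
  "maximal_lie_triple_subsystem scale br T \<longleftrightarrow> lie_triple_subsystem scale br T \<and> T \<noteq> UNIV \<and>
     (\<forall>S. lie_triple_subsystem scale br S \<and> T \<subseteq> S \<and> S \<noteq> UNIV \<longrightarrow> S = T)"

end

theory Submission
  imports Defs "HOL-Computational_Algebra.Fundamental_Theorem_Algebra"
begin

(* A Lie triple subsystem T with h \<subset> T \<subset> g forces h to be abelian: for K = span [T,T], the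
   subalgebra K + T properly contains h, hence is g, so K \<inter> T is a proper ideal, hence 0; but it
   contains [h,h]. It remains to see that a simple g has no abelian maximal subalgebra h (in the
   real case, unless dim g \<le> 3).

   Take an ad h-stable subspace V minimal over h. Each ad x with x \<in> h acts on the irreducible
   h-module V/h commuting with ad h, so an irreducible factor of its minimal polynomial annihilates
   V/h. Over the complex numbers the factor is linear: ad h preserves a line y + h, and the subalgebra
   h + span {y} = g has g = [g,g] = [h,y] of dimension at most dim h. Over the reals a quadratic
   factor yields a complex structure on V/h; any two of these agree up to sign, which traps
   ad h in a plane modulo h and gives dim g = dim [g,g] \<le> 3. *)

section \<open>Polynomials in an endomorphism\<close>

sublocale vector_space \<subseteq> endo: vector_space_pair scale scale ..

abbreviation (in vector_space) linear_endo :: "('b \<Rightarrow> 'b) \<Rightarrow> bool" where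
  "linear_endo f \<equiv> Vector_Spaces.linear scale scale f"

definition poly_endo :: "('k::field \<Rightarrow> 'v::ab_group_add \<Rightarrow> 'v) \<Rightarrow> 'k poly \<Rightarrow> ('v \<Rightarrow> 'v) \<Rightarrow> 'v \<Rightarrow> 'v" where
  "poly_endo sc p f = fold_coeffs (\<lambda>a g v. sc a v + f (g v)) p (\<lambda>v. 0)"

context vector_space
begin

lemma linear_endoI:
  assumes "\<And>x y. f (x + y) = f x + f y" and "\<And>c x. f (c *s x) = c *s f x"
  shows "linear_endo f"
  using assms vector_space_axioms by (simp add: Vector_Spaces.linear_iff)

lemma poly_endo_0 [simp]: "poly_endo scale 0 f v = 0"
  by (simp add: poly_endo_def)

lemma poly_endo_pCons [simp]:
  "linear_endo f \<Longrightarrow> poly_endo scale (pCons a p) f v = a *s v + f (poly_endo scale p f v)"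
  by (cases "p = 0 \<and> a = 0") (auto simp: poly_endo_def endo.linear_0)

lemma poly_endo_const: "linear_endo f \<Longrightarrow> poly_endo scale [:c:] f v = c *s v"
  by (simp add: endo.linear_0)

lemma linear_poly_endo:
  assumes f: "linear_endo f"
  shows "linear_endo (poly_endo scale p f)"
proof (rule linear_endoI)
  show "poly_endo scale p f (x + y) = poly_endo scale p f x + poly_endo scale p f y" for x y
    using f by (induction p) (simp_all add: endo.linear_add algebra_simps)
  show "poly_endo scale p f (c *s x) = c *s poly_endo scale p f x" for c x
    using f by (induction p) (simp_all add: endo.linear_add endo.linear_scale scale_right_distrib
        scale_left_commute)
qed

lemma poly_endo_add:
  "linear_endo f \<Longrightarrow> poly_endo scale (p + q) f v = poly_endo scale p f v + poly_endo scale q f v"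
proof (induction p arbitrary: q)
  case (pCons a p)
  then show ?case
    by (cases q) (simp add: endo.linear_add algebra_simps)
qed simp

lemma poly_endo_smult: "linear_endo f \<Longrightarrow> poly_endo scale (smult c p) f v = c *s poly_endo scale p f v"
  by (induction p) (simp_all add: endo.linear_scale scale_right_distrib)

lemma poly_endo_mult:
  "linear_endo f \<Longrightarrow> poly_endo scale (p * q) f v = poly_endo scale p f (poly_endo scale q f v)"
  by (induction p) (simp_all add: poly_endo_add poly_endo_smult)

lemma poly_endo_diff:
  "linear_endo f \<Longrightarrow> poly_endo scale (p - q) f v = poly_endo scale p f v - poly_endo scale q f v"
  using poly_endo_add[of f p "-q" v] poly_endo_smult[of f "-1" q v] by (simp add: minus_poly_def)

lemma poly_endo_monom: "linear_endo f \<Longrightarrow> poly_endo scale (monom a n) f v = a *s (f ^^ n) v"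
  by (induction n) (simp_all add: monom_0 monom_Suc endo.linear_scale endo.linear_0)

lemma poly_endo_sum:
  "linear_endo f \<Longrightarrow> poly_endo scale (sum g A) f v = (\<Sum>a\<in>A. poly_endo scale (g a) f v)"
  by (induction A rule: infinite_finite_induct) (simp_all add: poly_endo_add)

lemma poly_endo_commute:
  assumes "linear_endo f" "linear_endo g" "\<And>x. g (f x) = f (g x)"
  shows "g (poly_endo scale p f v) = poly_endo scale p f (g v)"
  using assms by (induction p) (simp_all add: endo.linear_add endo.linear_scale endo.linear_0)

lemma poly_endo_mem_subspace:
  assumes "linear_endo f" "subspace V" "\<And>x. x \<in> V \<Longrightarrow> f x \<in> V" "v \<in> V"
  shows "poly_endo scale p f v \<in> V"
  using assms by (induction p) (simp_all add: subspace_add subspace_scale subspace_0)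

lemma mem_span_pairE:
  assumes "v \<in> span {a, b}"
  obtains s t where "v = s *s a + t *s b"
proof -
  obtain s where "v - s *s a \<in> span {b}" using assms span_breakdown_eq[of v a "{b}"] by auto
  then obtain t where "v - s *s a = t *s b" by (auto simp: span_singleton)
  then show thesis using that[of s t] by (simp add: algebra_simps)
qed

lemma mem_span_insert_if_diff_scale_mem: "u - l *s y \<in> h \<Longrightarrow> u \<in> span (insert y h)"
  using span_breakdown_eq[of u y h] span_superset[of h] by blast

end

context finite_dimensional_vector_space
begin

lemma mem_span_iterates_mod:
  assumes h: "subspace h"
  shows "x \<in> span (h \<union> (\<lambda>i. (f ^^ i) v) ` {..<k}) \<Longrightarrow> \<exists>c. x - (\<Sum>i<k. c i *s (f ^^ i) v) \<in> h"
proof (induction k arbitrary: x)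
  case 0
  then have "x \<in> span h" by simp
  then have "x \<in> h" using h by (metis span_eq_iff)
  then show ?case by simp
next
  case (Suc k)
  have "h \<union> (\<lambda>i. (f ^^ i) v) ` {..<Suc k} = insert ((f ^^ k) v) (h \<union> (\<lambda>i. (f ^^ i) v) ` {..<k})"
    by (auto simp: lessThan_Suc)
  then obtain a where "x - a *s (f ^^ k) v \<in> span (h \<union> (\<lambda>i. (f ^^ i) v) ` {..<k})"
    using Suc.prems span_breakdown_eq by metis
  then obtain c where c: "x - a *s (f ^^ k) v - (\<Sum>i<k. c i *s (f ^^ i) v) \<in> h"
    using Suc.IH by blast
  have "(\<Sum>i<k. (c(k := a)) i *s (f ^^ i) v) = (\<Sum>i<k. c i *s (f ^^ i) v)"
    by (rule sum.cong) auto
  then have "x - (\<Sum>i<Suc k. (c(k := a)) i *s (f ^^ i) v) = x - a *s (f ^^ k) v - (\<Sum>i<k. c i *s (f ^^ i) v)"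
    by (simp add: algebra_simps)
  then show ?case using c by metis
qed

lemma exists_poly_endo_mem:
  assumes h: "subspace h" and f: "linear_endo f" and v: "v \<notin> h"
  obtains p where "p \<noteq> 0" "poly_endo scale p f v \<in> h"
proof -
  define U where "U k = h \<union> (\<lambda>i. (f ^^ i) v) ` {..<k}" for k
  have "\<exists>k. (f ^^ k) v \<in> span (U k)"
  proof (rule ccontr)
    assume indep: "\<nexists>k. (f ^^ k) v \<in> span (U k)"
    have "dim h + k \<le> dim (U k)" for k
    proof (induction k)
      case (Suc k)
      have "U (Suc k) = insert ((f ^^ k) v) (U k)" by (auto simp: U_def lessThan_Suc)
      then show ?case using indep Suc.IH by (simp add: dim_insert)
    qed (simp add: U_def)
    then show False
      using dim_subset_UNIV[of "U (Suc dimension)"] by (metis add_leE not_less_eq_eq)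
  qed
  then obtain k where "(f ^^ k) v \<in> span (U k)" by blast
  from mem_span_iterates_mod[OF h this[unfolded U_def]]
  obtain c where c: "(f ^^ k) v - (\<Sum>i<k. c i *s (f ^^ i) v) \<in> h" by blast
  define p where "p = monom 1 k - (\<Sum>i<k. monom (c i) i)"
  have "coeff p k = 1" by (simp add: p_def coeff_sum)
  then have "p \<noteq> 0" by auto
  moreover have "poly_endo scale p f v = (f ^^ k) v - (\<Sum>i<k. c i *s (f ^^ i) v)"
    by (simp add: p_def poly_endo_diff[OF f] poly_endo_monom[OF f] poly_endo_sum[OF f])
  with c have "poly_endo scale p f v \<in> h" by (simp only:)
  ultimately show thesis by (rule that)
qed

end

context vector_space
begin

text \<open>Induction on the degree: for \<open>p = q r\<close>, either \<open>r(f) v \<in> h\<close> already, or \<open>w = r(f) v\<close>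
  works for \<open>q\<close>.\<close>
lemma exists_factor_poly_endo_mem:
  assumes h: "subspace h" and V: "subspace V" and f: "linear_endo f"
    and fV: "\<And>x. x \<in> V \<Longrightarrow> f x \<in> V"
    and factor: "\<And>p::'a poly. degree p > 0 \<Longrightarrow> \<exists>q r. p = q * r \<and> degree q > 0 \<and> P q"
    and "v \<in> V" "v \<notin> h" "p \<noteq> 0" "poly_endo scale p f v \<in> h"
  shows "\<exists>q w. P q \<and> w \<in> V \<and> w \<notin> h \<and> poly_endo scale q f w \<in> h"
  using assms(6-)
proof (induction "degree p" arbitrary: p v rule: less_induct)
  case less
  show ?case
  proof (cases "degree p = 0")
    case True
    then obtain c where "p = [:c:]" by (metis degree_eq_zeroE)
    with less.prems have "c \<noteq> 0" "c *s v \<in> h" by (auto simp: poly_endo_const[OF f])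
    then have "v \<in> h" using subspace_scale[OF h, of "c *s v" "inverse c"] by simp
    with less.prems show ?thesis by blast
  next
    case False
    then obtain q r where qr: "p = q * r" "degree q > 0" "P q" using factor by blast
    with less.prems have "r \<noteq> 0" "q \<noteq> 0" by auto
    show ?thesis
    proof (cases "poly_endo scale r f v \<in> h")
      case True
      have "degree r < degree p" using qr \<open>r \<noteq> 0\<close> \<open>q \<noteq> 0\<close> by (simp add: degree_mult_eq)
      then show ?thesis using less.hyps less.prems(1,2) \<open>r \<noteq> 0\<close> True by blast
    next
      case False
      moreover have "poly_endo scale r f v \<in> V"
        by (rule poly_endo_mem_subspace[OF f V fV less.prems(1)])
      moreover have "poly_endo scale q f (poly_endo scale r f v) \<in> h"
        using less.prems(4) qr(1) poly_endo_mult[OF f] by simp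
      ultimately show ?thesis using qr(3) by blast
    qed
  qed
qed

end

section \<open>Irreducible factors of complex and real polynomials\<close>

lemma complex_poly_linear_factor:
  fixes p :: "complex poly"
  assumes "degree p > 0"
  shows "\<exists>q r. p = q * r \<and> degree q > 0 \<and> (\<exists>l. q = [:-l, 1:])"
proof -
  have "\<not> constant (poly p)" using assms constant_degree[of p] by simp
  then obtain z where "poly p z = 0" using fundamental_theorem_of_algebra by blast
  then obtain r where r: "p = [:-z, 1:] * r" by (auto simp: poly_eq_0_iff_dvd)
  show ?thesis by (rule exI[of _ "[:-z, 1:]"], rule exI[of _ r]) (simp add: r)
qed

definition poly_of_real :: "real poly \<Rightarrow> complex \<Rightarrow> complex" where
  "poly_of_real p z = poly (map_poly complex_of_real p) z"

lemma poly_of_real_0 [simp]: "poly_of_real 0 z = 0"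
  by (simp add: poly_of_real_def)

lemma poly_of_real_pCons [simp]: "poly_of_real (pCons a p) z = of_real a + z * poly_of_real p z"
  by (simp add: poly_of_real_def map_poly_pCons)

lemma poly_of_real_add: "poly_of_real (p + q) z = poly_of_real p z + poly_of_real q z"
proof (induction p arbitrary: q)
  case (pCons a p)
  then show ?case by (cases q) (simp add: algebra_simps)
qed simp

lemma poly_of_real_mult: "poly_of_real (p * q) z = poly_of_real p z * poly_of_real q z"
proof -
  have "poly_of_real (smult c p) z = of_real c * poly_of_real p z" for c p
    by (induction p) (simp_all add: algebra_simps)
  then show ?thesis by (induction p) (simp_all add: poly_of_real_add algebra_simps)
qed

lemma poly_of_real_of_real: "poly_of_real p (of_real x) = of_real (poly p x)"
  by (induction p) simp_all

lemma real_quadratic_dvd_if_nonreal_root: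
  fixes p :: "real poly"
  assumes z: "poly_of_real p z = 0" "Im z \<noteq> 0"
  shows "[:(Re z)\<^sup>2 + (Im z)\<^sup>2, -2 * Re z, 1:] dvd p"
proof -
  define Q where "Q = [:(Re z)\<^sup>2 + (Im z)\<^sup>2, -2 * Re z, 1:]"
  \<comment> \<open>the real quadratic with roots \<open>z\<close> and \<open>cnj z\<close>\<close>
  have "poly_of_real Q z = 0"
    by (simp add: Q_def complex_eq_iff power2_eq_square algebra_simps)
  then have r_root: "poly_of_real (p mod Q) z = 0"
    using z(1) poly_of_real_add[of "p div Q * Q" "p mod Q" z] poly_of_real_mult[of "p div Q" Q z]
    by simp
  have "p mod Q = 0"
  proof (rule ccontr)
    assume r: "p mod Q \<noteq> 0"
    define r0 r1 where "r0 = coeff (p mod Q) 0" and "r1 = coeff (p mod Q) 1"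
    have "degree (p mod Q) < 2"
      using degree_mod_less'[of Q p] r by (simp add: Q_def)
    then have r_eq: "p mod Q = [:r0, r1:]"
      by (intro poly_eqI) (auto simp: r0_def r1_def coeff_pCons coeff_eq_0 split: nat.splits)
    then have "r0 + Re z * r1 = 0" "Im z * r1 = 0"
      using r_root by (simp_all add: complex_eq_iff)
    then show False using z(2) r r_eq by simp
  qed
  then show ?thesis by (simp add: Q_def mod_eq_0_iff_dvd)
qed

lemma real_poly_linear_or_quadratic_factor:
  fixes p :: "real poly"
  assumes p: "degree p > 0"
  shows "\<exists>q r. p = q * r \<and> degree q > 0 \<and>
    ((\<exists>l. q = [:-l, 1:]) \<or> (\<exists>a c. q = [:c, a, 1:] \<and> a\<^sup>2 < 4 * c))"
proof -
  have "degree (map_poly complex_of_real p) = degree p" by (simp add: degree_map_poly)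
  then have "\<not> constant (poly (map_poly complex_of_real p))"
    using p constant_degree[of "map_poly complex_of_real p"] by simp
  then obtain z where z: "poly_of_real p z = 0"
    using fundamental_theorem_of_algebra unfolding poly_of_real_def by blast
  show ?thesis
  proof (cases "Im z = 0")
    case True
    then have "poly p (Re z) = 0"
      using z poly_of_real_of_real[of p "Re z"] by (simp add: complex_is_Real_iff)
    then obtain r where r: "p = [:-Re z, 1:] * r" by (auto simp: poly_eq_0_iff_dvd)
    show ?thesis by (rule exI[of _ "[:-Re z, 1:]"], rule exI[of _ r]) (simp add: r)
  next
    case False
    define Q where "Q = [:(Re z)\<^sup>2 + (Im z)\<^sup>2, -2 * Re z, 1:]"
    obtain r where "p = Q * r"
      using real_quadratic_dvd_if_nonreal_root[OF z False] unfolding Q_def by (elim dvdE)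
    moreover have "degree Q > 0" by (simp add: Q_def)
    moreover have "(-2 * Re z)\<^sup>2 < 4 * ((Re z)\<^sup>2 + (Im z)\<^sup>2)"
      using False by (simp add: power2_eq_square) (metis not_real_square_gt_zero)
    then have "\<exists>a c. Q = [:c, a, 1:] \<and> a\<^sup>2 < 4 * c" unfolding Q_def by fast
    ultimately show ?thesis by fast
  qed
qed

section \<open>Lie algebras and Lie triple systems\<close>

locale lie_alg =
  fixes scale :: "'k::field \<Rightarrow> 'v::ab_group_add \<Rightarrow> 'v" (infixr \<open>*s\<close> 75)
    and br :: "'v \<Rightarrow> 'v \<Rightarrow> 'v"
  assumes lie_algebra: "lie_algebra scale br"
begin

sublocale vector_space scale
  using lie_algebra unfolding lie_algebra_def by blast

lemma br_add_left: "br (x + y) z = br x z + br y z"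
  and br_add_right: "br x (y + z) = br x y + br x z"
  and br_scale_left: "br (a *s x) y = a *s br x y"
  and br_scale_right: "br x (a *s y) = a *s br x y"
  and br_self [simp]: "br x x = 0"
  and jacobi: "br x (br y z) + br y (br z x) + br z (br x y) = 0"
  using lie_algebra unfolding lie_algebra_def by blast+

lemma linear_ad: "linear_endo (br x)"
  by (rule linear_endoI) (simp_all add: br_add_right br_scale_right)

lemma br_zero_left [simp]: "br 0 y = 0"
  using br_add_left[of 0 0 y] by simp

lemma br_zero_right [simp]: "br x 0 = 0"
  using endo.linear_0[OF linear_ad] .

lemma br_antisym: "br x y = - br y x"
proof -
  have "br x y + br y x = br (x + y) (x + y)"
    unfolding br_add_left br_add_right by (simp add: add.commute)
  then have "br x y + br y x = 0" by simp
  then show ?thesis by (simp add: eq_neg_iff_add_eq_0)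
qed

lemma br_diff_right: "br x (y - z) = br x y - br x z"
  using endo.linear_diff[OF linear_ad] .

lemma ad_derivation: "br x (br y z) = br (br x y) z + br y (br x z)"
  using jacobi[of x y z] br_antisym[of z "br x y"] br_antisym[of "br z x"] br_antisym[of z x]
  by (simp add: endo.linear_neg[OF linear_ad] algebra_simps eq_neg_iff_add_eq_0)

lemma ad_commute: "br x y = 0 \<Longrightarrow> br x (br y u) = br y (br x u)"
  using ad_derivation[of x y u] by simp

lemma br_mem_subspace_span:
  assumes "a \<in> span A" "b \<in> span B" "subspace U" "\<And>a b. a \<in> A \<Longrightarrow> b \<in> B \<Longrightarrow> br a b \<in> U"
  shows "br a b \<in> U"
proof -
  have "br a' b \<in> U" if "a' \<in> A" for a'
  proof -
    have "subspace {b. br a' b \<in> U}"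
      using assms(3) by (simp add: subspace_def br_add_right br_scale_right)
    then show ?thesis using span_induct[OF assms(2)] assms(4) that by blast
  qed
  moreover have "subspace {a. br a b \<in> U}"
    using assms(3) by (simp add: subspace_def br_add_left br_scale_left)
  ultimately show ?thesis using span_induct[OF assms(1)] by blast
qed

lemma lie_subalgebra_span:
  assumes "\<And>a b. a \<in> A \<Longrightarrow> b \<in> A \<Longrightarrow> br a b \<in> span A"
  shows "lie_subalgebra scale br (span A)"
  unfolding lie_subalgebra_def using br_mem_subspace_span[of _ A _ A "span A"] assms by simp

definition abelian :: "'v set \<Rightarrow> bool" where
  "abelian S \<longleftrightarrow> (\<forall>a\<in>S. \<forall>b\<in>S. br a b = 0)"

definition bracket_span :: "'v set \<Rightarrow> 'v set" where
  "bracket_span T = span {br a b | a b. a \<in> T \<and> b \<in> T}"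

definition ad_stable :: "'v set \<Rightarrow> 'v set \<Rightarrow> bool" where
  "ad_stable h V \<longleftrightarrow> (\<forall>x\<in>h. \<forall>u\<in>V. br x u \<in> V)"

lemma maximal_subalgebra_subspace: "maximal_subalgebra scale br h \<Longrightarrow> subspace h"
  by (simp add: maximal_subalgebra_def lie_subalgebra_def)

lemma maximal_subalgebra_br_mem:
  "maximal_subalgebra scale br h \<Longrightarrow> x \<in> h \<Longrightarrow> y \<in> h \<Longrightarrow> br x y \<in> h"
  by (simp add: maximal_subalgebra_def lie_subalgebra_def)

lemma maximal_subalgebra_extension_eq_UNIV:
  assumes "maximal_subalgebra scale br h" "lie_subalgebra scale br K" "h \<subseteq> K" "K \<noteq> h"
  shows "K = UNIV"
  using assms unfolding maximal_subalgebra_def by blast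

definition minimal_stable_extension :: "'v set \<Rightarrow> 'v set \<Rightarrow> bool" where
  "minimal_stable_extension h V \<longleftrightarrow> subspace V \<and> h \<subseteq> V \<and> V \<noteq> h \<and> ad_stable h V \<and>
     (\<forall>W. subspace W \<and> h \<subseteq> W \<and> W \<subseteq> V \<and> ad_stable h W \<longrightarrow> W = h \<or> W = V)"

text \<open>The operator \<open>\<alpha> + \<beta> ad x\<close>. When it squares to \<open>-1\<close> modulo \<open>h\<close> on \<open>V\<close> we call it a complex
  structure on \<open>V/h\<close>.\<close>
definition ad_affine :: "'k \<Rightarrow> 'k \<Rightarrow> 'v \<Rightarrow> 'v \<Rightarrow> 'v" where
  "ad_affine \<alpha> \<beta> x u = \<alpha> *s u + \<beta> *s br x u"

lemma linear_ad_affine: "linear_endo (ad_affine \<alpha> \<beta> x)"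
  by (rule linear_endoI) (simp_all add: ad_affine_def br_add_right br_scale_right algebra_simps)

lemma ad_affine_commute_br: "br y x = 0 \<Longrightarrow> br y (ad_affine \<alpha> \<beta> x u) = ad_affine \<alpha> \<beta> x (br y u)"
  by (simp add: ad_affine_def br_add_right br_scale_right ad_commute)

lemma ad_affine_commute:
  "br x x' = 0 \<Longrightarrow> ad_affine \<alpha> \<beta> x (ad_affine \<alpha>' \<beta>' x' u) = ad_affine \<alpha>' \<beta>' x' (ad_affine \<alpha> \<beta> x u)"
  unfolding ad_affine_def br_add_right br_scale_right scale_right_distrib scale_scale
  by (simp add: ad_commute[of x x' u] mult.commute add_ac)

lemma ad_affine_mem: "subspace V \<Longrightarrow> u \<in> V \<Longrightarrow> br x u \<in> V \<Longrightarrow> ad_affine \<alpha> \<beta> x u \<in> V"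
  by (simp add: ad_affine_def subspace_add subspace_scale)

lemma ad_affine_twice:
  "ad_affine \<alpha> \<beta> x (ad_affine \<alpha> \<beta> x u) = (\<alpha> * \<alpha>) *s u + (2 * \<alpha> * \<beta>) *s br x u + (\<beta> * \<beta>) *s br x (br x u)"
  unfolding ad_affine_def br_add_right br_scale_right scale_right_distrib scale_scale
proof -
  have "(\<alpha> * \<beta>) *s br x u + (\<beta> * \<alpha>) *s br x u = (2 * \<alpha> * \<beta>) *s br x u"
    by (simp add: scale_left_distrib[symmetric] mult.commute)
  then show "(\<alpha> * \<alpha>) *s u + (\<alpha> * \<beta>) *s br x u + ((\<beta> * \<alpha>) *s br x u + (\<beta> * \<beta>) *s br x (br x u)) =
    (\<alpha> * \<alpha>) *s u + (2 * \<alpha> * \<beta>) *s br x u + (\<beta> * \<beta>) *s br x (br x u)"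
    by (simp add: add.assoc)
qed

lemma bracket_span_mem: "a \<in> T \<Longrightarrow> b \<in> T \<Longrightarrow> br a b \<in> bracket_span T"
  unfolding bracket_span_def by (rule span_base) blast

lemma br_mem_span_pair_if_abelian:
  assumes "abelian h" "x \<in> h" "u \<in> span (insert y (insert z h))"
  shows "br x u \<in> span {br x y, br x z}"
proof -
  have "subspace (br x -` span {br x y, br x z})"
    by (rule endo.linear_subspace_vimage[OF linear_ad subspace_span])
  moreover have "insert y (insert z h) \<subseteq> br x -` span {br x y, br x z}"
    using assms(1,2) by (auto simp: abelian_def span_base span_zero)
  ultimately show ?thesis using span_minimal assms(3) by blast
qed

lemma br_br_mem_span_if_complex_structure:
  assumes "subspace h" "\<beta> \<noteq> 0" "ad_affine \<alpha> \<beta> x (ad_affine \<alpha> \<beta> x y) + y \<in> h"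
  shows "br x (br x y) \<in> span (insert y (insert (br x y) h))"
proof -
  let ?S = "span (insert y (insert (br x y) h))"
  have "(\<alpha> * \<alpha> + 1) *s y + (2 * \<alpha> * \<beta>) *s br x y + (\<beta> * \<beta>) *s br x (br x y) \<in> ?S"
    using assms(3) span_superset[of "insert y (insert (br x y) h)"]
    by (auto simp: ad_affine_twice algebra_simps)
  moreover have "(\<alpha> * \<alpha> + 1) *s y + (2 * \<alpha> * \<beta>) *s br x y \<in> ?S"
    by (simp add: span_add span_scale span_base)
  ultimately have "(\<beta> * \<beta>) *s br x (br x y) \<in> ?S" by (metis span_diff add_diff_cancel_left')
  then have "inverse (\<beta> * \<beta>) *s (\<beta> * \<beta>) *s br x (br x y) \<in> ?S" by (rule span_scale)
  then show ?thesis using assms(2) by (simp del: inverse_mult_distrib)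
qed

lemma br_not_mem_if_complex_structure:
  assumes "subspace h" "abelian h" "x \<in> h" "y \<notin> h" "\<alpha> * \<alpha> + 1 \<noteq> 0"
    and "ad_affine \<alpha> \<beta> x (ad_affine \<alpha> \<beta> x y) + y \<in> h"
  shows "br x y \<notin> h"
proof
  assume xy: "br x y \<in> h"
  then have "br x (br x y) = 0" using assms(2,3) by (simp add: abelian_def)
  then have "(\<alpha> * \<alpha> + 1) *s y + (2 * \<alpha> * \<beta>) *s br x y \<in> h"
    using assms(6) by (simp add: ad_affine_twice algebra_simps)
  then have "(\<alpha> * \<alpha> + 1) *s y \<in> h"
    using xy assms(1) by (metis subspace_diff subspace_scale add_diff_cancel_right')
  then have "inverse (\<alpha> * \<alpha> + 1) *s (\<alpha> * \<alpha> + 1) *s y \<in> h"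
    by (rule subspace_scale[OF assms(1)])
  then show False using assms(4,5) by simp
qed

lemma minimal_stable_extension_preimage:
  assumes h: "lie_subalgebra scale br h" and V: "minimal_stable_extension h V"
    and \<phi>: "linear_endo \<phi>" "\<And>u. u \<in> h \<Longrightarrow> \<phi> u \<in> h" "\<And>x u. x \<in> h \<Longrightarrow> br x (\<phi> u) = \<phi> (br x u)"
  shows "{u \<in> V. \<phi> u \<in> h} = h \<or> {u \<in> V. \<phi> u \<in> h} = V"
proof -
  have sh: "subspace h" using h by (simp add: lie_subalgebra_def)
  have "{u \<in> V. \<phi> u \<in> h} = V \<inter> \<phi> -` h" by blast
  then have "subspace {u \<in> V. \<phi> u \<in> h}"
    using V endo.linear_subspace_vimage[OF \<phi>(1) sh]
    by (simp add: minimal_stable_extension_def subspace_inter)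
  moreover have "ad_stable h {u \<in> V. \<phi> u \<in> h}"
    unfolding ad_stable_def
  proof (intro ballI CollectI conjI)
    fix x u assume x: "x \<in> h" and u: "u \<in> {u \<in> V. \<phi> u \<in> h}"
    then show "br x u \<in> V" using V by (auto simp: minimal_stable_extension_def ad_stable_def)
    have "br x (\<phi> u) \<in> h" using h x u by (auto simp: lie_subalgebra_def)
    then show "\<phi> (br x u) \<in> h" using \<phi>(3)[OF x] by simp
  qed
  moreover have "h \<subseteq> {u \<in> V. \<phi> u \<in> h}" using V \<phi>(2) by (auto simp: minimal_stable_extension_def)
  moreover have "{u \<in> V. \<phi> u \<in> h} \<subseteq> V" by blast
  ultimately show ?thesis using V unfolding minimal_stable_extension_def by blast
qed

text \<open>Two commuting complex structures on the \<open>h\<close>-irreducible module \<open>V/h\<close> agree up to sign: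
  by minimality, \<open>G - J\<close> is either zero or injective on \<open>V/h\<close>, and \<open>(G - J)(G + J) = G\<^sup>2 - J\<^sup>2 = 0\<close>.\<close>
lemma complex_structures_agree:
  assumes h: "lie_subalgebra scale br h" "abelian h" and V: "minimal_stable_extension h V"
    and x: "x \<in> h" "x' \<in> h"
    and G: "\<And>u. u \<in> V \<Longrightarrow> ad_affine \<alpha> \<beta> x (ad_affine \<alpha> \<beta> x u) + u \<in> h"
    and J: "\<And>u. u \<in> V \<Longrightarrow> ad_affine \<alpha>' \<beta>' x' (ad_affine \<alpha>' \<beta>' x' u) + u \<in> h"
    and y: "y \<in> V"
  obtains \<sigma> where "ad_affine \<alpha> \<beta> x y - \<sigma> *s ad_affine \<alpha>' \<beta>' x' y \<in> h"
proof -
  let ?G = "ad_affine \<alpha> \<beta> x" and ?J = "ad_affine \<alpha>' \<beta>' x'"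
  have sh: "subspace h" and sV: "subspace V" and stable: "ad_stable h V"
    using h V by (simp_all add: lie_subalgebra_def minimal_stable_extension_def)
  have comm: "br a b = 0" if "a \<in> h" "b \<in> h" for a b using h(2) that by (simp add: abelian_def)
  have "{u \<in> V. ?G u - ?J u \<in> h} = h \<or> {u \<in> V. ?G u - ?J u \<in> h} = V"
  proof (rule minimal_stable_extension_preimage[OF h(1) V])
    show "linear_endo (\<lambda>u. ?G u - ?J u)"
      by (rule linear_endoI) (simp_all add: endo.linear_add[OF linear_ad_affine]
          endo.linear_scale[OF linear_ad_affine] scale_right_diff_distrib)
    show "?G u - ?J u \<in> h" if "u \<in> h" for u
      using that x h(1) sh by (simp add: ad_affine_mem subspace_diff lie_subalgebra_def)
    show "br x'' (?G u - ?J u) = ?G (br x'' u) - ?J (br x'' u)" if "x'' \<in> h" for x'' u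
      using that x comm by (simp add: br_diff_right ad_affine_commute_br)
  qed
  then show thesis
  proof
    assume "{u \<in> V. ?G u - ?J u \<in> h} = V"
    then show thesis using y that[of 1] by auto
  next
    assume kernel: "{u \<in> V. ?G u - ?J u \<in> h} = h"
    have "?G y + ?J y \<in> V"
      using y sV stable x by (simp add: ad_affine_mem subspace_add ad_stable_def)
    moreover have "?G (?G y + ?J y) - ?J (?G y + ?J y) = (?G (?G y) + y) - (?J (?J y) + y)"
      using ad_affine_commute[OF comm[OF x], of \<alpha> \<beta> \<alpha>' \<beta>' y]
      by (simp add: endo.linear_add[OF linear_ad_affine])
    moreover have "(?G (?G y) + y) - (?J (?J y) + y) \<in> h"
      using subspace_diff[OF sh G[OF y] J[OF y]] .
    ultimately have "?G y + ?J y \<in> V" "?G (?G y + ?J y) - ?J (?G y + ?J y) \<in> h"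
      by simp_all
    then have "?G y + ?J y \<in> h" using kernel by blast
    then show thesis using that[of "-1"] by simp
  qed
qed

lemma br_mem_span_if_two_complex_structures:
  assumes h: "lie_subalgebra scale br h" "abelian h" and V: "minimal_stable_extension h V"
    and y: "y \<in> V" and x: "x \<in> h" "x0 \<in> h" and "\<beta> \<noteq> 0"
    and G: "\<And>u. u \<in> V \<Longrightarrow> ad_affine \<alpha> \<beta> x (ad_affine \<alpha> \<beta> x u) + u \<in> h"
    and J: "\<And>u. u \<in> V \<Longrightarrow> ad_affine \<alpha>0 \<beta>0 x0 (ad_affine \<alpha>0 \<beta>0 x0 u) + u \<in> h"
  shows "br x y \<in> span (insert y (insert (br x0 y) h))"
proof -
  let ?S = "span (insert y (insert (br x0 y) h))"
  obtain \<sigma> where "ad_affine \<alpha> \<beta> x y - \<sigma> *s ad_affine \<alpha>0 \<beta>0 x0 y \<in> h"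
    using complex_structures_agree[OF h V x G J y] .
  then have "ad_affine \<alpha> \<beta> x y - \<sigma> *s ad_affine \<alpha>0 \<beta>0 x0 y \<in> ?S"
    using span_superset[of "insert y (insert (br x0 y) h)"] by blast
  moreover have "\<sigma> *s ad_affine \<alpha>0 \<beta>0 x0 y - \<alpha> *s y \<in> ?S"
    by (simp add: ad_affine_def span_diff span_add span_scale span_base)
  ultimately have "\<beta> *s br x y \<in> ?S"
    using span_add by (fastforce simp: ad_affine_def)
  then have "inverse \<beta> *s \<beta> *s br x y \<in> ?S" by (rule span_scale)
  then show ?thesis using \<open>\<beta> \<noteq> 0\<close> by simp
qed

context
  fixes T assumes T: "lie_triple_subsystem scale br T"
begin

lemma br_bracket_span_left: "k \<in> bracket_span T \<Longrightarrow> t \<in> T \<Longrightarrow> br k t \<in> T"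
  using T unfolding lie_triple_subsystem_def bracket_span_def
  by (intro br_mem_subspace_span[of k _ t T]) (auto intro: span_base)

lemma br_bracket_span_right: "k \<in> bracket_span T \<Longrightarrow> t \<in> T \<Longrightarrow> br t k \<in> T"
  using br_bracket_span_left[of k t] br_antisym[of t k] T
  by (simp add: lie_triple_subsystem_def subspace_neg)

lemma br_bracket_span_closed:
  assumes "k \<in> bracket_span T" "k' \<in> bracket_span T"
  shows "br k k' \<in> bracket_span T"
proof (rule br_mem_subspace_span[of k _ k'])
  show "k \<in> span {br a b | a b. a \<in> T \<and> b \<in> T}" "k' \<in> span {br a b | a b. a \<in> T \<and> b \<in> T}"
    using assms by (simp_all add: bracket_span_def)
  fix a b assume "a \<in> {br a b | a b. a \<in> T \<and> b \<in> T}" "b \<in> {br a b | a b. a \<in> T \<and> b \<in> T}"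
  then obtain a1 a2 b1 b2 where ab: "a = br a1 a2" "b = br b1 b2" "a1 \<in> T" "a2 \<in> T" "b1 \<in> T" "b2 \<in> T"
    by blast
  then have "a \<in> bracket_span T" by (simp add: bracket_span_mem)
  then have "br (br a b1) b2 \<in> bracket_span T" "br b1 (br a b2) \<in> bracket_span T"
    using ab br_bracket_span_left bracket_span_mem by simp_all
  then show "br a b \<in> bracket_span T"
    unfolding ab(2) ad_derivation[of a b1 b2] by (simp add: bracket_span_def span_add)
qed (simp add: bracket_span_def)

lemma lie_subalgebra_bracket_span_plus:
  "lie_subalgebra scale br {k + t | k t. k \<in> bracket_span T \<and> t \<in> T}"
  unfolding lie_subalgebra_def
proof (intro conjI ballI)
  have "subspace T" using T by (simp add: lie_triple_subsystem_def)
  then show "subspace {k + t | k t. k \<in> bracket_span T \<and> t \<in> T}"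
    by (intro subspace_sums) (simp_all add: bracket_span_def)
  fix x y assume "x \<in> {k + t | k t. k \<in> bracket_span T \<and> t \<in> T}" "y \<in> {k + t | k t. k \<in> bracket_span T \<and> t \<in> T}"
  then obtain k t k' t' where xy: "x = k + t" "y = k' + t'" "k \<in> bracket_span T" "t \<in> T"
      "k' \<in> bracket_span T" "t' \<in> T"
    by blast
  have "br x y = (br k k' + br t t') + (br k t' + br t k')"
    unfolding xy by (simp add: br_add_left br_add_right algebra_simps)
  moreover have "br k k' + br t t' \<in> bracket_span T"
    using xy br_bracket_span_closed bracket_span_mem by (simp add: bracket_span_def span_add)
  moreover have "br k t' + br t k' \<in> T"
    using xy br_bracket_span_left br_bracket_span_right T
    by (simp add: lie_triple_subsystem_def subspace_add)
  ultimately show "br x y \<in> {k + t | k t. k \<in> bracket_span T \<and> t \<in> T}" by blast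
qed

end

end

locale simple_lie_alg = lie_alg +
  assumes nonabelian: "\<exists>x y. br x y \<noteq> 0"
    and ideal_trivial: "lie_ideal scale br I \<Longrightarrow> I = {0} \<or> I = UNIV"
begin

lemma bracket_span_UNIV: "bracket_span UNIV = UNIV"
proof -
  have "lie_ideal scale br (bracket_span UNIV)"
    by (simp add: lie_ideal_def bracket_span_mem) (simp add: bracket_span_def)
  moreover obtain x y where "br x y \<noteq> 0" using nonabelian by blast
  then have "bracket_span UNIV \<noteq> {0}" using bracket_span_mem[of x UNIV y] by auto
  ultimately show ?thesis using ideal_trivial by blast
qed

lemma abelian_if_triple_subsystem_between:
  assumes h: "maximal_subalgebra scale br h" and T: "lie_triple_subsystem scale br T"
    and "h \<subseteq> T" "T \<noteq> h" "T \<noteq> UNIV"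
  shows "abelian h"
proof -
  let ?K = "bracket_span T"
  have sT: "subspace T" using T by (simp add: lie_triple_subsystem_def)
  have "T \<subseteq> {k + t | k t. k \<in> ?K \<and> t \<in> T}"
    using span_zero[of "{br a b | a b. a \<in> T \<and> b \<in> T}"] by (force simp: bracket_span_def)
  then have sum_UNIV: "{k + t | k t. k \<in> ?K \<and> t \<in> T} = UNIV"
    using maximal_subalgebra_extension_eq_UNIV[OF h lie_subalgebra_bracket_span_plus[OF T]] assms(3,4)
    by blast
  have "lie_ideal scale br (?K \<inter> T)"
    unfolding lie_ideal_def
  proof (intro conjI allI impI)
    show "subspace (?K \<inter> T)" using sT by (simp add: subspace_inter bracket_span_def)
    fix x a assume a: "a \<in> ?K \<inter> T"
    obtain k t where x: "x = k + t" "k \<in> ?K" "t \<in> T" using sum_UNIV by blast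
    have "br k a \<in> ?K \<inter> T" "br t a \<in> ?K \<inter> T"
      using a x br_bracket_span_closed[OF T] br_bracket_span_left[OF T] bracket_span_mem
        br_bracket_span_right[OF T] by auto
    then show "br x a \<in> ?K \<inter> T"
      unfolding x(1) br_add_left using sT by (simp add: subspace_add span_add bracket_span_def)
  qed
  then have "?K \<inter> T = {0}" using ideal_trivial assms(5) by blast
  moreover have "br a b \<in> ?K \<inter> T" if "a \<in> h" "b \<in> h" for a b
    using that assms(3) maximal_subalgebra_br_mem[OF h] bracket_span_mem by blast
  ultimately show ?thesis by (auto simp: abelian_def)
qed

lemma maximal_lie_triple_subsystem_if_not_abelian:
  assumes h: "maximal_subalgebra scale br h" and "\<not> abelian h"
  shows "maximal_lie_triple_subsystem scale br h"
  using assms abelian_if_triple_subsystem_between[OF h]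
  by (auto simp: maximal_lie_triple_subsystem_def lie_triple_subsystem_def
      maximal_subalgebra_subspace maximal_subalgebra_br_mem maximal_subalgebra_def)

end

section \<open>Abelian maximal subalgebras of simple Lie algebras\<close>

locale fd_simple_lie_alg = simple_lie_alg scale br + finite_dimensional_vector_space scale Basis
  for scale :: "'k::field \<Rightarrow> 'v::ab_group_add \<Rightarrow> 'v" (infixr \<open>*s\<close> 75)
    and br :: "'v \<Rightarrow> 'v \<Rightarrow> 'v" and Basis :: "'v set"
begin

lemma dim_le_card_if_brackets_in_span:
  assumes "span A = UNIV" "\<And>a b. a \<in> A \<Longrightarrow> b \<in> A \<Longrightarrow> br a b \<in> span B" "finite B"
  shows "dim (UNIV :: 'v set) \<le> card B"
proof -
  have "bracket_span UNIV \<subseteq> span B"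
    unfolding bracket_span_def
    using br_mem_subspace_span[of _ A _ A "span B"] assms(1,2) by (intro span_minimal) auto
  then have "UNIV \<subseteq> span B" using bracket_span_UNIV by simp
  then show ?thesis using assms(3) by (rule dim_le_card)
qed

lemma abelian_maximal_no_stable_line:
  assumes h: "maximal_subalgebra scale br h" "abelian h" and y: "y \<notin> h"
    and hy: "\<And>x. x \<in> h \<Longrightarrow> br x y \<in> span (insert y h)"
  shows False
proof -
  have "br a b \<in> span (insert y h)" if "a \<in> insert y h" "b \<in> insert y h" for a b
    using that h(2) hy br_antisym[of y b] span_neg[of "br b y" "insert y h"]
    by (auto simp: abelian_def span_zero)
  then have "lie_subalgebra scale br (span (insert y h))" by (rule lie_subalgebra_span)
  moreover have "h \<subseteq> span (insert y h)" "y \<in> span (insert y h)"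
    by (auto intro: span_base)
  ultimately have span_UNIV: "span (insert y h) = UNIV"
    using maximal_subalgebra_extension_eq_UNIV[OF h(1)] y by blast
  obtain B where B: "B \<subseteq> h" "independent B" "h \<subseteq> span B" "card B = dim h"
    using basis_exists by blast
  have fin: "finite B" using B(2) finiteI_independent by blast
  have "insert y h \<subseteq> span (insert y B)"
    using B(3) span_mono[of B "insert y B"] span_base[of y "insert y B"] by blast
  then have "span (insert y B) = UNIV" using span_UNIV span_minimal[of "insert y h"] by auto
  then have "dim (UNIV :: 'v set) \<le> card ((\<lambda>x. br x y) ` B)"
  proof (rule dim_le_card_if_brackets_in_span)
    have "br a b = 0" if "a \<in> B" "b \<in> B" for a b
      using that B(1) h(2) by (auto simp: abelian_def)
    moreover fix a b assume "a \<in> insert y B" "b \<in> insert y B"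
    ultimately show "br a b \<in> span ((\<lambda>x. br x y) ` B)"
      using br_antisym[of y b] span_neg[of "br b y"] span_base[of _ "(\<lambda>x. br x y) ` B"]
      by (auto simp: span_zero)
  qed (use fin in simp)
  also have "\<dots> \<le> dim h" using card_image_le[OF fin] B(4) by simp
  finally have "dim (UNIV :: 'v set) \<le> dim h" .
  moreover have "y \<notin> span h" using y maximal_subalgebra_subspace[OF h(1)] by (metis span_eq_iff)
  then have "dim (UNIV :: 'v set) = dim h + 1"
    using span_UNIV dim_span[of "insert y h"] by (simp add: dim_insert)
  ultimately show False by simp
qed

text \<open>Otherwise \<open>[w1,w2]\<close> spans a stable line: \<open>ad x\<close> acts on it by the trace of \<open>ad x\<close> on
  \<open>span {w1, w2}\<close>.\<close>
lemma abelian_maximal_stable_plane_br_mem: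
  assumes h: "maximal_subalgebra scale br h" "abelian h"
    and hw: "\<And>x. x \<in> h \<Longrightarrow> br x w1 \<in> span {w1, w2} \<and> br x w2 \<in> span {w1, w2}"
  shows "br w1 w2 \<in> h"
proof (rule ccontr)
  assume "br w1 w2 \<notin> h"
  then show False
  proof (rule abelian_maximal_no_stable_line[OF h])
    fix x assume x: "x \<in> h"
    obtain a b where ab: "br x w1 = a *s w1 + b *s w2" using hw[OF x] by (auto elim: mem_span_pairE)
    obtain c d where cd: "br x w2 = c *s w1 + d *s w2" using hw[OF x] by (auto elim: mem_span_pairE)
    have "br x (br w1 w2) = br (br x w1) w2 + br w1 (br x w2)" by (rule ad_derivation)
    also have "\<dots> = (a + d) *s br w1 w2"
      unfolding ab cd by (simp add: br_add_left br_add_right br_scale_left br_scale_right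
          scale_left_distrib)
    finally show "br x (br w1 w2) \<in> span (insert (br w1 w2) h)" by (simp add: span_base span_scale)
  qed
qed

text \<open>As \<open>[w1,w2] \<in> h\<close>, \<open>h + span {w1, w2}\<close> is a subalgebra, hence \<open>g\<close>, and then
  \<open>g = [g,g] \<subseteq> span {w1, w2, [w1,w2]}\<close>.\<close>
lemma abelian_maximal_stable_plane_dim_le_3:
  assumes h: "maximal_subalgebra scale br h" "abelian h" and w1: "w1 \<notin> h"
    and hw: "\<And>x. x \<in> h \<Longrightarrow> br x w1 \<in> span {w1, w2} \<and> br x w2 \<in> span {w1, w2}"
  shows "dim (UNIV :: 'v set) \<le> 3"
proof -
  define z where "z = br w1 w2"
  have zh: "z \<in> h" unfolding z_def using abelian_maximal_stable_plane_br_mem[OF h hw] .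
  define G where "G = insert w1 (insert w2 h)"
  have br_G: "br a b \<in> U" if "subspace U" "w1 \<in> U" "w2 \<in> U" "z \<in> U" "a \<in> G" "b \<in> G" for a b U
  proof -
    have "span {w1, w2} \<subseteq> U" using that(1-3) by (simp add: span_minimal)
    then have "br x w \<in> U" "br w x \<in> U" if "x \<in> h" "w \<in> {w1, w2}" for x w
      using that hw[OF \<open>x \<in> h\<close>] br_antisym[of w x] subspace_neg[OF \<open>subspace U\<close>] by auto
    moreover have "br w2 w1 \<in> U"
      using that(1,4) br_antisym[of w2 w1] subspace_neg by (fastforce simp: z_def)
    ultimately show ?thesis
      using that h(2) subspace_0[OF that(1)] by (auto simp: G_def abelian_def z_def)
  qed
  have "lie_subalgebra scale br (span G)"
    by (rule lie_subalgebra_span, rule br_G)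
      (use zh in \<open>auto simp: G_def intro: span_base\<close>)
  moreover have "h \<subseteq> span G" "w1 \<in> span G" by (auto simp: G_def intro: span_base)
  ultimately have "span G = UNIV"
    using maximal_subalgebra_extension_eq_UNIV[OF h(1)] w1 by blast
  then have "dim (UNIV :: 'v set) \<le> card {w1, w2, z}"
    by (rule dim_le_card_if_brackets_in_span, intro br_G) (auto intro: span_base)
  also have "\<dots> \<le> 3" by (simp add: card_insert_le_m1)
  finally show ?thesis .
qed

lemma minimal_stable_extension_exists:
  assumes "lie_subalgebra scale br h" "h \<noteq> UNIV"
  obtains V where "minimal_stable_extension h V"
proof -
  define Ext where "Ext = {V. subspace V \<and> h \<subseteq> V \<and> V \<noteq> h \<and> ad_stable h V}"
  have "UNIV \<in> Ext" using assms by (auto simp: Ext_def ad_stable_def)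
  then obtain V where V: "V \<in> Ext" "\<And>W. W \<in> Ext \<Longrightarrow> dim V \<le> dim W"
    using arg_min_nat_lemma[of "\<lambda>V. V \<in> Ext" UNIV dim] by blast
  have "W = h \<or> W = V" if "subspace W" "h \<subseteq> W" "W \<subseteq> V" "ad_stable h W" for W
  proof (rule ccontr)
    assume "\<not> (W = h \<or> W = V)"
    then have "W \<in> Ext" "W \<subset> V" using that by (auto simp: Ext_def)
    moreover have "span W = W" "span V = V" using V(1) \<open>subspace W\<close> by (simp_all add: Ext_def)
    ultimately have "dim W < dim V" by (metis dim_psubset)
    with V(2)[OF \<open>W \<in> Ext\<close>] show False by simp
  qed
  then have "minimal_stable_extension h V"
    using V(1) unfolding minimal_stable_extension_def Ext_def by blast
  then show thesis by (rule that)
qed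

lemma annihilating_factor:
  assumes h: "lie_subalgebra scale br h" "abelian h" and V: "minimal_stable_extension h V"
    and x: "x \<in> h"
    and factor: "\<And>p::'k poly. degree p > 0 \<Longrightarrow> \<exists>q r. p = q * r \<and> degree q > 0 \<and> P q"
  obtains q where "P q" "\<And>u. u \<in> V \<Longrightarrow> poly_endo scale q (br x) u \<in> h"
proof -
  have sh: "subspace h" and sV: "subspace V" and stable: "ad_stable h V"
    using h V by (simp_all add: lie_subalgebra_def minimal_stable_extension_def)
  obtain y where y: "y \<in> V" "y \<notin> h" using V by (auto simp: minimal_stable_extension_def)
  have adV: "br x u \<in> V" if "u \<in> V" for u using stable x that by (simp add: ad_stable_def)
  obtain p where "p \<noteq> 0" "poly_endo scale p (br x) y \<in> h"
    using exists_poly_endo_mem[OF sh linear_ad y(2)] .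
  then obtain q w where qw: "P q" "w \<in> V" "w \<notin> h" "poly_endo scale q (br x) w \<in> h"
    using exists_factor_poly_endo_mem[OF sh sV linear_ad adV factor y] by blast
  have "{u \<in> V. poly_endo scale q (br x) u \<in> h} = h \<or> {u \<in> V. poly_endo scale q (br x) u \<in> h} = V"
  proof (rule minimal_stable_extension_preimage[OF h(1) V linear_poly_endo[OF linear_ad]])
    show "poly_endo scale q (br x) u \<in> h" if "u \<in> h" for u
      using poly_endo_mem_subspace[OF linear_ad sh _ that] h x by (simp add: lie_subalgebra_def)
    show "br x' (poly_endo scale q (br x) u) = poly_endo scale q (br x) (br x' u)" if "x' \<in> h" for x' u
      using h(2) that x by (intro poly_endo_commute linear_ad) (simp add: abelian_def ad_commute)
  qed
  then have "{u \<in> V. poly_endo scale q (br x) u \<in> h} = V" using qw by blast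
  then show thesis using qw(1) that by blast
qed

lemma not_abelian_maximal_if_linear_factors:
  assumes h: "maximal_subalgebra scale br h"
    and factor: "\<And>p::'k poly. degree p > 0 \<Longrightarrow> \<exists>q r. p = q * r \<and> degree q > 0 \<and> (\<exists>l. q = [:-l, 1:])"
  shows "\<not> abelian h"
proof
  assume ab: "abelian h"
  have sub: "lie_subalgebra scale br h" using h by (simp add: maximal_subalgebra_def)
  obtain V where V: "minimal_stable_extension h V"
    using minimal_stable_extension_exists[OF sub] h by (auto simp: maximal_subalgebra_def)
  obtain y where y: "y \<in> V" "y \<notin> h" using V by (auto simp: minimal_stable_extension_def)
  show False
  proof (rule abelian_maximal_no_stable_line[OF h ab y(2)])
    fix x assume "x \<in> h"
    obtain q where "\<exists>l. q = [:-l, 1:]" "\<And>u. u \<in> V \<Longrightarrow> poly_endo scale q (br x) u \<in> h"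
      using annihilating_factor[where P = "\<lambda>q. \<exists>l. q = [:-l, 1:]", OF sub ab V \<open>x \<in> h\<close> factor]
      by blast
    then obtain l where "poly_endo scale [:-l, 1:] (br x) y \<in> h" using y(1) by blast
    then have "br x y - l *s y \<in> span (insert y h)"
      using span_superset[of "insert y h"] by (auto simp: linear_ad)
    moreover have "l *s y \<in> span (insert y h)" by (simp add: span_base span_scale)
    ultimately show "br x y \<in> span (insert y h)" by (metis span_add diff_add_cancel)
  qed
qed

end

locale fd_simple_real_lie_alg = fd_simple_lie_alg scale br Basis
  for scale :: "real \<Rightarrow> 'v::ab_group_add \<Rightarrow> 'v" (infixr \<open>*s\<close> 75)
    and br :: "'v \<Rightarrow> 'v \<Rightarrow> 'v" and Basis :: "'v set"
begin

text \<open>Completing the square: for \<open>s = sqrt (4c - a\<^sup>2)\<close>, \<open>(a + 2 ad x)/s\<close> squares to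
  \<open>-1 + (4/s\<^sup>2) (ad x\<^sup>2 + a ad x + c)\<close>.\<close>
lemma complex_structure_of_irreducible_quadratic:
  assumes "a\<^sup>2 < 4 * c"
  obtains \<alpha> \<beta> where "\<beta> \<noteq> 0"
    "\<And>u. ad_affine \<alpha> \<beta> x (ad_affine \<alpha> \<beta> x u) + u
       = (4 / (4 * c - a\<^sup>2)) *s (c *s u + br x (a *s u + br x u))"
proof -
  define s where "s = sqrt (4 * c - a\<^sup>2)"
  have s: "s > 0" "s\<^sup>2 = 4 * c - a\<^sup>2" using assms by (simp_all add: s_def)
  have coeffs: "a / s * (a / s) + 1 = 4 / s\<^sup>2 * c" "2 * (a / s) * (2 / s) = 4 / s\<^sup>2 * a"
    "2 / s * (2 / s) = 4 / s\<^sup>2"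
    using s by (simp_all add: field_simps power2_eq_square)
  have "ad_affine (a / s) (2 / s) x (ad_affine (a / s) (2 / s) x u) + u
      = (4 / s\<^sup>2) *s (c *s u + br x (a *s u + br x u))" for u
  proof -
    have "ad_affine (a / s) (2 / s) x (ad_affine (a / s) (2 / s) x u) + u
        = (a / s * (a / s) + 1) *s u + (2 * (a / s) * (2 / s)) *s br x u
          + (2 / s * (2 / s)) *s br x (br x u)"
      by (simp add: ad_affine_twice scale_left_distrib add_ac)
    also have "\<dots> = (4 / s\<^sup>2 * c) *s u + (4 / s\<^sup>2 * a) *s br x u + (4 / s\<^sup>2) *s br x (br x u)"
      by (simp only: coeffs)
    also have "\<dots> = (4 / s\<^sup>2) *s (c *s u + br x (a *s u + br x u))"
      by (simp add: br_add_right br_scale_right scale_right_distrib)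
    finally show ?thesis .
  qed
  with s show thesis by (intro that[of "2 / s" "a / s"]) simp_all
qed

lemma ad_scalar_or_complex_structure:
  assumes h: "lie_subalgebra scale br h" "abelian h" and V: "minimal_stable_extension h V"
    and x: "x \<in> h"
  shows "(\<exists>l. \<forall>u\<in>V. br x u - l *s u \<in> h) \<or>
    (\<exists>\<alpha> \<beta>. \<beta> \<noteq> 0 \<and> (\<forall>u\<in>V. ad_affine \<alpha> \<beta> x (ad_affine \<alpha> \<beta> x u) + u \<in> h))"
proof -
  have sh: "subspace h" using h by (simp add: lie_subalgebra_def)
  obtain q where q: "(\<exists>l. q = [:-l, 1:]) \<or> (\<exists>a c. q = [:c, a, 1:] \<and> a\<^sup>2 < 4 * c)"
    and qV: "\<And>u. u \<in> V \<Longrightarrow> poly_endo scale q (br x) u \<in> h"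
    using annihilating_factor[OF h V x real_poly_linear_or_quadratic_factor] by blast
  then show ?thesis
  proof (elim disjE exE conjE)
    fix l assume "q = [:-l, 1:]"
    then have "\<forall>u\<in>V. br x u - l *s u \<in> h" using qV by (simp add: linear_ad)
    then show ?thesis by blast
  next
    fix a c assume "q = [:c, a, 1:]" and "a\<^sup>2 < 4 * c"
    then have qu: "c *s u + br x (a *s u + br x u) \<in> h" if "u \<in> V" for u
      using qV[OF that] by (simp add: linear_ad)
    obtain \<alpha> \<beta> where "\<beta> \<noteq> 0" and "\<And>u. ad_affine \<alpha> \<beta> x (ad_affine \<alpha> \<beta> x u) + u
       = (4 / (4 * c - a\<^sup>2)) *s (c *s u + br x (a *s u + br x u))"
      using complex_structure_of_irreducible_quadratic[OF \<open>a\<^sup>2 < 4 * c\<close>] by blast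
    then have "\<forall>u\<in>V. ad_affine \<alpha> \<beta> x (ad_affine \<alpha> \<beta> x u) + u \<in> h"
      using qu subspace_scale[OF sh] by simp
    with \<open>\<beta> \<noteq> 0\<close> show ?thesis by blast
  qed
qed

lemma br_mem_span_if_complex_structure:
  assumes h: "lie_subalgebra scale br h" "abelian h" and V: "minimal_stable_extension h V"
    and y: "y \<in> V" and x: "x \<in> h" "x0 \<in> h"
    and J: "\<And>u. u \<in> V \<Longrightarrow> ad_affine \<alpha>0 \<beta>0 x0 (ad_affine \<alpha>0 \<beta>0 x0 u) + u \<in> h"
  shows "br x y \<in> span (insert y (insert (br x0 y) h))"
  using ad_scalar_or_complex_structure[OF h V x(1)]
proof (elim disjE exE conjE)
  fix l assume "\<forall>u\<in>V. br x u - l *s u \<in> h"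
  then have "br x y \<in> span (insert y h)" using y mem_span_insert_if_diff_scale_mem by blast
  then show ?thesis by (rule subsetD[OF span_mono, rotated]) blast
next
  fix \<alpha> \<beta> assume "\<beta> \<noteq> 0" "\<forall>u\<in>V. ad_affine \<alpha> \<beta> x (ad_affine \<alpha> \<beta> x u) + u \<in> h"
  then show ?thesis using br_mem_span_if_two_complex_structures[OF h V y x] J by blast
qed

text \<open>If some \<open>ad x\<^sub>0\<close> is a complex structure on \<open>V/h\<close>, all brackets \<open>[x,y]\<close> stay in
  \<open>h + span {y, [x\<^sub>0,y]}\<close>, so applying \<open>ad x\<^sub>0\<close> (which kills \<open>h\<close>) shows that
  \<open>w\<^sub>1 = [x\<^sub>0,y]\<close>, \<open>w\<^sub>2 = [x\<^sub>0,[x\<^sub>0,y]]\<close> span an \<open>ad h\<close>-stable plane.\<close>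
lemma abelian_maximal_dim_le_3:
  assumes h: "maximal_subalgebra scale br h" "abelian h"
  shows "dim (UNIV :: 'v set) \<le> 3"
proof -
  have sub: "lie_subalgebra scale br h" and sh: "subspace h"
    using h by (simp_all add: maximal_subalgebra_def lie_subalgebra_def)
  obtain V where V: "minimal_stable_extension h V"
    using minimal_stable_extension_exists[OF sub] h by (auto simp: maximal_subalgebra_def)
  obtain y where y: "y \<in> V" "y \<notin> h" using V by (auto simp: minimal_stable_extension_def)
  show ?thesis
  proof (cases "\<forall>x\<in>h. \<exists>l. \<forall>u\<in>V. br x u - l *s u \<in> h")
    case True
    have False
    proof (rule abelian_maximal_no_stable_line[OF h y(2)])
      show "br x y \<in> span (insert y h)" if "x \<in> h" for x
        using True that y(1) mem_span_insert_if_diff_scale_mem by blast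
    qed
    then show ?thesis ..
  next
    case False
    then obtain x0 \<alpha>0 \<beta>0 where x0: "x0 \<in> h" "\<beta>0 \<noteq> 0"
      and J0: "\<And>u. u \<in> V \<Longrightarrow> ad_affine \<alpha>0 \<beta>0 x0 (ad_affine \<alpha>0 \<beta>0 x0 u) + u \<in> h"
      using ad_scalar_or_complex_structure[OF sub h(2) V] by blast
    let ?w1 = "br x0 y" and ?w2 = "br x0 (br x0 y)"
    let ?S = "span (insert y (insert ?w1 h))"
    have plane: "br x0 u \<in> span {?w1, ?w2}" if "u \<in> ?S" for u
      using br_mem_span_pair_if_abelian[OF h(2) x0(1) that] .
    have "span {?w1, ?w2} \<subseteq> ?S"
      using br_br_mem_span_if_complex_structure[OF sh x0(2) J0[OF y(1)]]
      by (intro span_minimal) (auto intro: span_base)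
    moreover have "br x ?w1 = br x0 (br x y)" "br x ?w2 = br x0 (br x0 (br x y))" if "x \<in> h" for x
      using that x0(1) h(2) by (simp_all add: abelian_def ad_commute)
    ultimately have "br x ?w1 \<in> span {?w1, ?w2} \<and> br x ?w2 \<in> span {?w1, ?w2}" if "x \<in> h" for x
      using plane br_mem_span_if_complex_structure[OF sub h(2) V y(1) that x0(1) J0] that by auto
    moreover have "?w1 \<notin> h"
      using br_not_mem_if_complex_structure[OF sh h(2) x0(1) y(2) _ J0[OF y(1)]]
        zero_le_square[of \<alpha>0] by linarith
    ultimately show ?thesis using abelian_maximal_stable_plane_dim_le_3[OF h] by blast
  qed
qed

end

lemma fd_simple_lie_algI:
  assumes "simple_lie_algebra scale br" "finite_dim scale"
  obtains Basis where "fd_simple_lie_alg scale br Basis"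
proof -
  have la: "lie_algebra scale br" and vs: "vector_space scale"
    using assms(1) by (simp_all add: simple_lie_algebra_def lie_algebra_def)
  interpret vector_space scale by (rule vs)
  obtain B where B: "finite B" "span B = UNIV"
    using assms(2) unfolding finite_dim_def by blast
  obtain A where A: "A \<subseteq> B" "independent A" "B \<subseteq> span A"
    using maximal_independent_subset[of B] by blast
  have "span A = UNIV" using B(2) A(3) span_minimal[of B "span A"] by auto
  then have "finite_dimensional_vector_space scale A"
    using A(2) finite_subset[OF A(1) B(1)]
    by unfold_locales simp_all
  moreover have "simple_lie_alg scale br"
    using assms(1) la by unfold_locales (auto simp: simple_lie_algebra_def)
  ultimately show thesis using that[of A] by (simp add: fd_simple_lie_alg_def)
qed

theorem mainTheorem2:
  shows "(\<forall>(scale :: complex \<Rightarrow> 'a::ab_group_add \<Rightarrow> 'a) br H.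
            simple_lie_algebra scale br \<and> finite_dim scale \<and> maximal_subalgebra scale br H
            \<longrightarrow> maximal_lie_triple_subsystem scale br H)
       \<and> (\<forall>(scale :: real \<Rightarrow> 'b::ab_group_add \<Rightarrow> 'b) br H.
            simple_lie_algebra scale br \<and> finite_dim scale \<and> vector_space.dim scale (UNIV :: 'b set) > 3
            \<and> maximal_subalgebra scale br H
            \<longrightarrow> maximal_lie_triple_subsystem scale br H)"
proof (intro conjI allI impI; elim conjE)
  fix scale :: "complex \<Rightarrow> 'a \<Rightarrow> 'a" and br H
  assume simple: "simple_lie_algebra scale br" "finite_dim scale" and H: "maximal_subalgebra scale br H"
  obtain Basis where "fd_simple_lie_alg scale br Basis" using fd_simple_lie_algI[OF simple] .
  then interpret fd_simple_lie_alg scale br Basis .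
  show "maximal_lie_triple_subsystem scale br H"
    using maximal_lie_triple_subsystem_if_not_abelian[OF H]
      not_abelian_maximal_if_linear_factors[OF H complex_poly_linear_factor] by blast
next
  fix scale :: "real \<Rightarrow> 'b \<Rightarrow> 'b" and br H
  assume simple: "simple_lie_algebra scale br" "finite_dim scale"
    and dim: "vector_space.dim scale (UNIV :: 'b set) > 3" and H: "maximal_subalgebra scale br H"
  obtain Basis where "fd_simple_lie_alg scale br Basis" using fd_simple_lie_algI[OF simple] .
  then interpret fd_simple_real_lie_alg scale br Basis by (simp add: fd_simple_real_lie_alg_def)
  show "maximal_lie_triple_subsystem scale br H"
    using maximal_lie_triple_subsystem_if_not_abelian[OF H] abelian_maximal_dim_le_3[OF H]
      dim by (meson not_le)
qed

end
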